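(* $\mathsf{LC}$ is $\mathsf{TNNIL}$-conservative over $\mathsf{LLe}^+$: for every $A\in\mathsf{TNNIL}$, if $\mathsf{LC}\vdash A$ then $\mathsf{LLe}^+\vdash A$.
   Context: Modal language: propositional variables, $\bot$, $\wedge,\vee,\to$, $\Box$; atomic = variables and $\bot$; $\boxdot A:=A\wedge\Box A$. $\mathsf{iK4}$: intuitionistic propositional logic in the modal language plus $\Box(A\to B)\to(\Box A\to\Box B)$ and $\Box A\to\Box\Box A$, closed under modus ponens and necessitation; $\mathsf{iGL}$: $\mathsf{iK4}$ plus Löb's axiom $\Box(\Box A\to A)\to\Box A$. $\mathsf{LC}:=\mathsf{iGL}+\{A\to\Box A\}$ (completeness principle for all $A$). $\mathsf{NOI}$: propositions in which every $\to$ lies in the scope of a $\Box$. Leivant's translation: $A^l=A$ for atomic/boxed $A$; $(A\wedge B)^l=A^l\wedge B^l$; $(A\vee B)^l=\boxdot A^l\vee\boxdot B^l$; $(A\to B)^l=A\to B^l$ if $A\in\mathsf{NOI}$, else $A\to B$. $\mathsf{LLe}^+:=\mathsf{iGL}+\{\Box A\to\Box A^l\}+\{p\to\Box p: p\text{ atomic}\}$. $\mathsf{TNNIL}$: smallest class containing atomic propositions, closed under $\wedge,\vee,\Box$, and containing $A\to B$ whenever $A,B\in\mathsf{TNNIL}$ and $A\in\mathsf{NOI}$. *)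

theory Defs
  imports Main
begin

datatype fm = Var nat | Bot | And fm fm | Or fm fm | Imp fm fm | Box fm

definition boxdot :: "fm \<Rightarrow> fm" where
  "boxdot A = And A (Box A)"

fun atomic :: "fm \<Rightarrow> bool" where
  "atomic (Var _) = True"
| "atomic Bot = True"
| "atomic _ = False"

fun noi :: "fm \<Rightarrow> bool" where
  "noi (Var _) = True"
| "noi Bot = True"
| "noi (And A B) = (noi A \<and> noi B)"
| "noi (Or A B) = (noi A \<and> noi B)"
| "noi (Imp A B) = False"
| "noi (Box A) = True"

fun leiv :: "fm \<Rightarrow> fm" where
  "leiv (Var p) = Var p"
| "leiv Bot = Bot"
| "leiv (Box A) = Box A"
| "leiv (And A B) = And (leiv A) (leiv B)"
| "leiv (Or A B) = Or (boxdot (leiv A)) (boxdot (leiv B))"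
| "leiv (Imp A B) = (if noi A then Imp A (leiv B) else Imp A B)"

inductive tnnil :: "fm \<Rightarrow> bool" where
  tn_atom: "atomic A \<Longrightarrow> tnnil A"
| tn_and: "tnnil A \<Longrightarrow> tnnil B \<Longrightarrow> tnnil (And A B)"
| tn_or: "tnnil A \<Longrightarrow> tnnil B \<Longrightarrow> tnnil (Or A B)"
| tn_box: "tnnil A \<Longrightarrow> tnnil (Box A)"
| tn_imp: "tnnil A \<Longrightarrow> tnnil B \<Longrightarrow> noi A \<Longrightarrow> tnnil (Imp A B)"

inductive deriv :: "fm set \<Rightarrow> fm \<Rightarrow> bool" for Ax :: "fm set" where
  ax_extra: "A \<in> Ax \<Longrightarrow> deriv Ax A"
| ax_k: "deriv Ax (Imp A (Imp B A))"
| ax_s: "deriv Ax (Imp (Imp A (Imp B C)) (Imp (Imp A B) (Imp A C)))"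
| ax_and1: "deriv Ax (Imp (And A B) A)"
| ax_and2: "deriv Ax (Imp (And A B) B)"
| ax_andI: "deriv Ax (Imp A (Imp B (And A B)))"
| ax_or1: "deriv Ax (Imp A (Or A B))"
| ax_or2: "deriv Ax (Imp B (Or A B))"
| ax_orE: "deriv Ax (Imp (Imp A C) (Imp (Imp B C) (Imp (Or A B) C)))"
| ax_bot: "deriv Ax (Imp Bot A)"
| ax_K: "deriv Ax (Imp (Box (Imp A B)) (Imp (Box A) (Box B)))"
| ax_4: "deriv Ax (Imp (Box A) (Box (Box A)))"
| mp: "deriv Ax (Imp A B) \<Longrightarrow> deriv Ax A \<Longrightarrow> deriv Ax B"
| nec: "deriv Ax A \<Longrightarrow> deriv Ax (Box A)"

definition lob_ax :: "fm set" where
  "lob_ax = {Imp (Box (Imp (Box A) A)) (Box A) | A. True}"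

definition iGL :: "fm \<Rightarrow> bool" where
  "iGL A \<longleftrightarrow> deriv lob_ax A"

definition LC :: "fm \<Rightarrow> bool" where
  "LC A \<longleftrightarrow> deriv (lob_ax \<union> {Imp B (Box B) | B. True}) A"

definition LLe_plus :: "fm \<Rightarrow> bool" where
  "LLe_plus A \<longleftrightarrow> deriv (lob_ax \<union> {Imp (Box B) (Box (leiv B)) | B. True}
                              \<union> {Imp p (Box p) | p. atomic p}) A"

end

theory Submission
  imports Defs
begin

text \<open>
  Let \<open>A\<degree>\<close> replace every implication \<open>B \<rightarrow> C\<close> by \<open>boxdot (B\<degree> \<rightarrow> C\<degree>)\<close>.
  In \<open>LLe\<^sup>+\<close> every translated formula satisfies \<open>X\<degree> \<rightarrow> \<box>X\<degree>\<close> (for atoms this is an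
  axiom, for implications it holds because \<open>boxdot Y \<rightarrow> \<box>(boxdot Y)\<close>), so the translated
  completeness principle is provable, and so are the translations of the remaining axioms
  and rules: \<open>LC \<turnstile> A\<close> implies \<open>LLe\<^sup>+ \<turnstile> A\<degree>\<close>. For \<open>A \<in> TNNIL\<close> one shows \<open>A\<degree> \<rightarrow> A\<close> by
  induction on \<open>A\<close>, together with \<open>boxdot A\<^sup>l \<rightarrow> A\<degree>\<close> and, for \<open>A \<in> NOI\<close>, \<open>A \<rightarrow> A\<degree>\<close>.
  Leivant's principle \<open>\<box>A \<rightarrow> \<box>A\<^sup>l\<close> is what turns \<open>\<box>A\<close> into \<open>\<box>A\<degree>\<close> in the box case.
\<close>

text \<open>Derivability from hypotheses \<open>H\<close>. Necessitation is only available for theorems (via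
  \<open>deriv\<close>), which is what makes the deduction theorem \<open>hderiv_ImpI\<close> hold.\<close>

inductive hderiv :: "fm set \<Rightarrow> fm set \<Rightarrow> fm \<Rightarrow> bool" for Ax :: "fm set" where
  hyp: "A \<in> H \<Longrightarrow> hderiv Ax H A"
| from_deriv: "deriv Ax A \<Longrightarrow> hderiv Ax H A"
| mp: "hderiv Ax H (Imp A B) \<Longrightarrow> hderiv Ax H A \<Longrightarrow> hderiv Ax H B"

lemma deriv_imp_refl: "deriv Ax (Imp A A)"
proof -
  have "deriv Ax (Imp (Imp A (Imp (Imp A A) A)) (Imp (Imp A (Imp A A)) (Imp A A)))"
    by (rule ax_s)
  then have "deriv Ax (Imp (Imp A (Imp A A)) (Imp A A))"
    using ax_k deriv.mp by blast
  then show ?thesis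
    using ax_k deriv.mp by blast
qed

lemma hderiv_insert_hyp: "hderiv Ax (insert A H) A"
  by (simp add: hderiv.hyp)

lemma hderiv_ImpI_aux: "hderiv Ax H' B \<Longrightarrow> H' = insert A H \<Longrightarrow> hderiv Ax H (Imp A B)"
proof (induction rule: hderiv.induct)
  case (hyp C)
  show ?case
  proof (cases "C = A")
    case True
    then show ?thesis by (simp add: hderiv.from_deriv deriv_imp_refl)
  next
    case False
    with hyp have "C \<in> H" by simp
    then show ?thesis by (meson hderiv.hyp hderiv.from_deriv hderiv.mp ax_k)
  qed
next
  case (from_deriv C)
  then show ?case by (meson hderiv.from_deriv hderiv.mp ax_k)
next
  case (mp C D)
  then show ?case by (meson hderiv.from_deriv hderiv.mp ax_s)
qed

lemma hderiv_ImpI: "hderiv Ax (insert A H) B \<Longrightarrow> hderiv Ax H (Imp A B)"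
  using hderiv_ImpI_aux by blast

lemma deriv_of_hderiv_empty: "hderiv Ax {} A \<Longrightarrow> deriv Ax A"
  by (induction "{} :: fm set" A rule: hderiv.induct) (auto intro: deriv.mp)

lemma deriv_ImpI: "hderiv Ax {A} B \<Longrightarrow> deriv Ax (Imp A B)"
  by (simp add: deriv_of_hderiv_empty hderiv_ImpI)

lemma hderiv_weaken: "hderiv Ax H A \<Longrightarrow> hderiv Ax (insert B H) A"
  by (induction rule: hderiv.induct) (auto intro: hderiv.intros)

lemma hderiv_deriv_mp: "deriv Ax (Imp A B) \<Longrightarrow> hderiv Ax H A \<Longrightarrow> hderiv Ax H B"
  by (meson hderiv.from_deriv hderiv.mp)

lemma deriv_imp_trans:
  assumes "deriv Ax (Imp A B)" and "deriv Ax (Imp B C)"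
  shows "deriv Ax (Imp A C)"
  by (rule deriv_ImpI[OF hderiv_deriv_mp[OF assms(2) hderiv_deriv_mp[OF assms(1) hderiv_insert_hyp]]])

lemma hderiv_AndI: "hderiv Ax H A \<Longrightarrow> hderiv Ax H B \<Longrightarrow> hderiv Ax H (And A B)"
  by (meson ax_andI hderiv.from_deriv hderiv.mp)

lemma hderiv_AndD1: "hderiv Ax H (And A B) \<Longrightarrow> hderiv Ax H A"
  by (meson ax_and1 hderiv_deriv_mp)

lemma hderiv_AndD2: "hderiv Ax H (And A B) \<Longrightarrow> hderiv Ax H B"
  by (meson ax_and2 hderiv_deriv_mp)

lemma hderiv_OrI1: "hderiv Ax H A \<Longrightarrow> hderiv Ax H (Or A B)"
  by (meson ax_or1 hderiv_deriv_mp)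

lemma hderiv_OrI2: "hderiv Ax H B \<Longrightarrow> hderiv Ax H (Or A B)"
  by (meson ax_or2 hderiv_deriv_mp)

lemma hderiv_OrE:
  "hderiv Ax H (Or A B) \<Longrightarrow> hderiv Ax (insert A H) C \<Longrightarrow> hderiv Ax (insert B H) C
    \<Longrightarrow> hderiv Ax H C"
  by (meson ax_orE hderiv.from_deriv hderiv.mp hderiv_ImpI)

lemma deriv_OrE: "deriv Ax (Imp A C) \<Longrightarrow> deriv Ax (Imp B C) \<Longrightarrow> deriv Ax (Imp (Or A B) C)"
  by (meson ax_orE deriv.mp)

lemma deriv_Or_mono:
  "deriv Ax (Imp A A') \<Longrightarrow> deriv Ax (Imp B B') \<Longrightarrow> deriv Ax (Imp (Or A B) (Or A' B'))"
  by (intro deriv_ImpI, rule hderiv_OrE[OF hderiv_insert_hyp])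
    (meson hderiv_OrI1 hderiv_OrI2 hderiv_deriv_mp hderiv_insert_hyp)+

lemma deriv_And_mono:
  "deriv Ax (Imp A A') \<Longrightarrow> deriv Ax (Imp B B') \<Longrightarrow> deriv Ax (Imp (And A B) (And A' B'))"
  by (intro deriv_ImpI hderiv_AndI)
    (meson hderiv_AndD1 hderiv_AndD2 hderiv_deriv_mp hderiv_insert_hyp)+

lemma deriv_Box_mono: "deriv Ax (Imp A B) \<Longrightarrow> deriv Ax (Imp (Box A) (Box B))"
  by (meson ax_K nec deriv.mp)

lemma hderiv_Box_mono: "deriv Ax (Imp A B) \<Longrightarrow> hderiv Ax H (Box A) \<Longrightarrow> hderiv Ax H (Box B)"
  by (meson deriv_Box_mono hderiv_deriv_mp)

lemma hderiv_Box_mp: "hderiv Ax H (Box (Imp A B)) \<Longrightarrow> hderiv Ax H (Box A) \<Longrightarrow> hderiv Ax H (Box B)"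
  by (meson ax_K hderiv.mp hderiv_deriv_mp)

lemma deriv_Box_And: "deriv Ax (Imp (And (Box A) (Box B)) (Box (And A B)))"
proof (rule deriv_ImpI)
  let ?H = "{And (Box A) (Box B)}"
  have "hderiv Ax ?H (Box A)" and "hderiv Ax ?H (Box B)"
    by (rule hderiv_AndD1[OF hderiv_insert_hyp], rule hderiv_AndD2[OF hderiv_insert_hyp])
  then show "hderiv Ax ?H (Box (And A B))"
    by (rule hderiv_Box_mp[OF hderiv_Box_mono[OF ax_andI]])
qed

lemma deriv_boxdotI: "deriv Ax A \<Longrightarrow> deriv Ax (boxdot A)"
  unfolding boxdot_def by (meson ax_andI deriv.mp nec)

lemma deriv_boxdot_elim: "deriv Ax (Imp (boxdot A) A)"
  unfolding boxdot_def by (rule ax_and1)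

lemma deriv_Box_boxdot: "deriv Ax (Imp (Box A) (Box (boxdot A)))"
proof (rule deriv_ImpI)
  have box: "hderiv Ax {Box A} (Box A)"
    by (rule hderiv_insert_hyp)
  show "hderiv Ax {Box A} (Box (boxdot A))"
    unfolding boxdot_def
    by (rule hderiv_Box_mp[OF hderiv_Box_mono[OF ax_andI box] hderiv_deriv_mp[OF ax_4 box]])
qed

lemma deriv_boxdot_Box_boxdot: "deriv Ax (Imp (boxdot A) (Box (boxdot A)))"
  by (rule deriv_imp_trans[OF _ deriv_Box_boxdot]) (simp add: boxdot_def ax_and2)

lemma deriv_boxdot_And: "deriv Ax (Imp (boxdot (And A B)) (And (boxdot A) (boxdot B)))"
  unfolding boxdot_def
proof (rule deriv_ImpI)
  let ?H = "{And (And A B) (Box (And A B))}"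
  have "hderiv Ax ?H (And A B)" "hderiv Ax ?H (Box (And A B))"
    by (meson hderiv_AndD1 hderiv_AndD2 hderiv_insert_hyp)+
  then show "hderiv Ax ?H (And (And A (Box A)) (And B (Box B)))"
    by (meson ax_and1 ax_and2 hderiv_AndD1 hderiv_AndD2 hderiv_AndI hderiv_Box_mono)
qed

lemma hderiv_boxdotI: "hderiv Ax H A \<Longrightarrow> hderiv Ax H (Box A) \<Longrightarrow> hderiv Ax H (boxdot A)"
  unfolding boxdot_def by (rule hderiv_AndI)

lemma hderiv_boxdotD: "hderiv Ax H (boxdot A) \<Longrightarrow> hderiv Ax H A"
  unfolding boxdot_def by (rule hderiv_AndD1)

lemma hderiv_boxdot_Box: "hderiv Ax H (boxdot A) \<Longrightarrow> hderiv Ax H (Box A)"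
  unfolding boxdot_def by (rule hderiv_AndD2)

lemma hderiv_boxdot_mp: "hderiv Ax H (boxdot (Imp A B)) \<Longrightarrow> hderiv Ax H A \<Longrightarrow> hderiv Ax H B"
  by (meson hderiv_boxdotD hderiv.mp)

lemma deriv_imp_boxdot:
  assumes "deriv Ax (Imp A (Box A))" and "deriv Ax (Imp A B)"
  shows "deriv Ax (Imp A (boxdot B))"
proof (rule deriv_ImpI)
  have "hderiv Ax {A} B" and "hderiv Ax {A} (Box B)"
    by (rule hderiv_deriv_mp[OF assms(2) hderiv_insert_hyp],
        rule hderiv_Box_mono[OF assms(2) hderiv_deriv_mp[OF assms(1) hderiv_insert_hyp]])
  then show "hderiv Ax {A} (boxdot B)"
    by (rule hderiv_boxdotI)
qed

fun boxdot_imps :: "fm \<Rightarrow> fm" where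
  "boxdot_imps (Var p) = Var p"
| "boxdot_imps Bot = Bot"
| "boxdot_imps (And A B) = And (boxdot_imps A) (boxdot_imps B)"
| "boxdot_imps (Or A B) = Or (boxdot_imps A) (boxdot_imps B)"
| "boxdot_imps (Imp A B) = boxdot (Imp (boxdot_imps A) (boxdot_imps B))"
| "boxdot_imps (Box A) = Box (boxdot_imps A)"

lemma deriv_boxdot_imps_Imp:
  "deriv Ax (boxdot_imps (Imp A B)) \<longleftrightarrow> deriv Ax (Imp (boxdot_imps A) (boxdot_imps B))"
proof
  assume "deriv Ax (boxdot_imps (Imp A B))"
  then show "deriv Ax (Imp (boxdot_imps A) (boxdot_imps B))"
    by (simp add: deriv.mp[OF deriv_boxdot_elim])
next
  assume "deriv Ax (Imp (boxdot_imps A) (boxdot_imps B))"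
  then show "deriv Ax (boxdot_imps (Imp A B))"
    by (simp add: deriv_boxdotI)
qed

text \<open>The three clauses must be proved simultaneously: the implication case of the first
  needs the third for the antecedent, and the box case of the third needs the second.\<close>

definition boxdot_imps_adequate :: "fm set \<Rightarrow> fm \<Rightarrow> bool" where
  "boxdot_imps_adequate Ax E \<longleftrightarrow>
     deriv Ax (Imp (boxdot_imps E) E) \<and>
     deriv Ax (Imp (boxdot (leiv E)) (boxdot_imps E)) \<and>
     (noi E \<longrightarrow> deriv Ax (Imp E (boxdot_imps E)))"

lemma boxdot_imps_adequate_atomic: "atomic E \<Longrightarrow> boxdot_imps_adequate Ax E"
  by (cases E) (simp_all add: boxdot_imps_adequate_def deriv_imp_refl deriv_boxdot_elim)

lemma boxdot_imps_adequate_And: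
  assumes "boxdot_imps_adequate Ax A" and "boxdot_imps_adequate Ax B"
  shows "boxdot_imps_adequate Ax (And A B)"
  using assms deriv_imp_trans[OF deriv_boxdot_And deriv_And_mono]
  by (simp add: boxdot_imps_adequate_def deriv_And_mono)

lemma boxdot_imps_adequate_Or:
  assumes "boxdot_imps_adequate Ax A" and "boxdot_imps_adequate Ax B"
  shows "boxdot_imps_adequate Ax (Or A B)"
  using assms deriv_imp_trans[OF deriv_boxdot_elim deriv_Or_mono]
  by (simp add: boxdot_imps_adequate_def deriv_Or_mono)

lemma boxdot_imps_adequate_Box:
  assumes Leivant: "deriv Ax (Imp (Box A) (Box (leiv A)))"
    and "boxdot_imps_adequate Ax A"
  shows "boxdot_imps_adequate Ax (Box A)"
proof -
  from assms have "deriv Ax (Imp (boxdot (leiv A)) (boxdot_imps A))"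
    by (simp add: boxdot_imps_adequate_def)
  then have "deriv Ax (Imp (Box A) (Box (boxdot_imps A)))"
    by (rule deriv_imp_trans[OF Leivant deriv_imp_trans[OF deriv_Box_boxdot deriv_Box_mono]])
  with assms show ?thesis
    by (simp add: boxdot_imps_adequate_def deriv_Box_mono deriv_imp_trans[OF deriv_boxdot_elim])
qed

lemma boxdot_imps_adequate_Imp:
  assumes tr_F_Box: "deriv Ax (Imp (boxdot_imps F) (Box (boxdot_imps F)))"
    and "noi F" and "boxdot_imps_adequate Ax F" and "boxdot_imps_adequate Ax G"
  shows "boxdot_imps_adequate Ax (Imp F G)"
proof -
  from assms have from_F: "deriv Ax (Imp (boxdot_imps F) F)"
    and to_F: "deriv Ax (Imp F (boxdot_imps F))"
    and from_G: "deriv Ax (Imp (boxdot_imps G) G)"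
    and leiv_G: "deriv Ax (Imp (boxdot (leiv G)) (boxdot_imps G))"
    by (simp_all add: boxdot_imps_adequate_def)
  have undo: "deriv Ax (Imp (boxdot (Imp (boxdot_imps F) (boxdot_imps G))) (Imp F G))"
  proof (intro deriv_ImpI hderiv_ImpI)
    let ?H = "insert F {boxdot (Imp (boxdot_imps F) (boxdot_imps G))}"
    have "hderiv Ax ?H (boxdot (Imp (boxdot_imps F) (boxdot_imps G)))"
      by (simp add: hderiv.hyp)
    then show "hderiv Ax ?H G"
      by (rule hderiv_deriv_mp[OF from_G hderiv_boxdot_mp[OF _ hderiv_deriv_mp[OF to_F hderiv_insert_hyp]]])
  qed
  have "deriv Ax (Imp (boxdot (Imp F (leiv G))) (Imp (boxdot_imps F) (boxdot_imps G)))"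
  proof (intro deriv_ImpI hderiv_ImpI)
    let ?H = "insert (boxdot_imps F) {boxdot (Imp F (leiv G))}"
    have F: "hderiv Ax ?H F"
      by (rule hderiv_deriv_mp[OF from_F hderiv_insert_hyp])
    have Box_F: "hderiv Ax ?H (Box F)"
      by (rule hderiv_Box_mono[OF from_F hderiv_deriv_mp[OF tr_F_Box hderiv_insert_hyp]])
    have hyp: "hderiv Ax ?H (boxdot (Imp F (leiv G)))"
      by (simp add: hderiv.hyp)
    have "hderiv Ax ?H (leiv G)"
      by (rule hderiv_boxdot_mp[OF hyp F])
    moreover have "hderiv Ax ?H (Box (leiv G))"
      by (rule hderiv_Box_mp[OF hderiv_boxdot_Box[OF hyp] Box_F])
    ultimately show "hderiv Ax ?H (boxdot_imps G)"
      by (rule hderiv_deriv_mp[OF leiv_G hderiv_boxdotI])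
  qed
  then have "deriv Ax (Imp (boxdot (Imp F (leiv G))) (boxdot_imps (Imp F G)))"
    by (simp add: deriv_imp_boxdot deriv_boxdot_Box_boxdot)
  with undo \<open>noi F\<close> show ?thesis
    by (simp add: boxdot_imps_adequate_def)
qed

lemma deriv_boxdot_imps_Loeb:
  assumes "deriv Ax (Imp (Box (Imp (Box (boxdot_imps A)) (boxdot_imps A))) (Box (boxdot_imps A)))"
  shows "deriv Ax (boxdot_imps (Imp (Box (Imp (Box A) A)) (Box A)))"
  by (rule deriv_boxdot_imps_Imp[THEN iffD2])
    (simp add: deriv_imp_trans[OF deriv_Box_mono[OF deriv_boxdot_elim] assms])

context
  fixes Ax :: "fm set"
  assumes atomic_Box: "\<And>p. atomic p \<Longrightarrow> deriv Ax (Imp p (Box p))"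
begin

lemma deriv_boxdot_imps_Box: "deriv Ax (Imp (boxdot_imps A) (Box (boxdot_imps A)))"
proof (induction A)
  case (Var n)
  show ?case using atomic_Box[of "Var n"] by simp
next
  case Bot
  show ?case using atomic_Box[of Bot] by simp
next
  case (And A B)
  show ?case
    by (simp, rule deriv_imp_trans[OF deriv_And_mono[OF And.IH] deriv_Box_And])
next
  case (Or A B)
  have a: "deriv Ax (Imp (Box (boxdot_imps A)) (Box (Or (boxdot_imps A) (boxdot_imps B))))"
    and b: "deriv Ax (Imp (Box (boxdot_imps B)) (Box (Or (boxdot_imps A) (boxdot_imps B))))"
    by (simp_all add: deriv_Box_mono ax_or1 ax_or2)
  show ?case
    using deriv_OrE[OF deriv_imp_trans[OF Or.IH(1) a] deriv_imp_trans[OF Or.IH(2) b]] by simp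
next
  case (Imp A B)
  show ?case by (simp add: deriv_boxdot_Box_boxdot)
next
  case (Box A)
  show ?case by (simp add: ax_4)
qed

lemma deriv_boxdot_imps_curry:
  assumes "deriv Ax (Imp (boxdot_imps (And A B)) (boxdot_imps C))"
  shows "deriv Ax (Imp (boxdot_imps A) (boxdot_imps (Imp B C)))"
proof -
  have "deriv Ax (Imp (boxdot_imps A) (Imp (boxdot_imps B) (boxdot_imps C)))"
    by (intro deriv_ImpI hderiv_ImpI hderiv_deriv_mp[OF assms[simplified]] hderiv_AndI
        hderiv_insert_hyp hderiv.hyp) simp
  then show ?thesis
    by (simp add: deriv_imp_boxdot deriv_boxdot_imps_Box)
qed

lemma deriv_boxdot_imps_S:
  "deriv Ax (boxdot_imps (Imp (Imp A (Imp B C)) (Imp (Imp A B) (Imp A C))))"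
proof (intro deriv_boxdot_imps_Imp[THEN iffD2] deriv_boxdot_imps_curry, simp, rule deriv_ImpI)
  let ?H = "{And (And (boxdot (Imp (boxdot_imps A) (boxdot (Imp (boxdot_imps B) (boxdot_imps C)))))
    (boxdot (Imp (boxdot_imps A) (boxdot_imps B)))) (boxdot_imps A)}"
  have abc: "hderiv Ax ?H (boxdot (Imp (boxdot_imps A) (boxdot (Imp (boxdot_imps B) (boxdot_imps C)))))"
    and ab: "hderiv Ax ?H (boxdot (Imp (boxdot_imps A) (boxdot_imps B)))"
    and a: "hderiv Ax ?H (boxdot_imps A)"
    by (meson hderiv_AndD1 hderiv_AndD2 hderiv_insert_hyp)+
  show "hderiv Ax ?H (boxdot_imps C)"
    by (rule hderiv_boxdot_mp[OF hderiv_boxdot_mp[OF abc a] hderiv_boxdot_mp[OF ab a]])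
qed

lemma deriv_boxdot_imps_OrE:
  "deriv Ax (boxdot_imps (Imp (Imp A C) (Imp (Imp B C) (Imp (Or A B) C))))"
proof (intro deriv_boxdot_imps_Imp[THEN iffD2] deriv_boxdot_imps_curry, simp, rule deriv_ImpI)
  let ?H = "{And (And (boxdot (Imp (boxdot_imps A) (boxdot_imps C)))
    (boxdot (Imp (boxdot_imps B) (boxdot_imps C)))) (Or (boxdot_imps A) (boxdot_imps B))}"
  have ac: "hderiv Ax ?H (boxdot (Imp (boxdot_imps A) (boxdot_imps C)))"
    and bc: "hderiv Ax ?H (boxdot (Imp (boxdot_imps B) (boxdot_imps C)))"
    and ab: "hderiv Ax ?H (Or (boxdot_imps A) (boxdot_imps B))"
    by (meson hderiv_AndD1 hderiv_AndD2 hderiv_insert_hyp)+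
  show "hderiv Ax ?H (boxdot_imps C)"
    by (rule hderiv_OrE[OF ab];
        rule hderiv_boxdot_mp[OF hderiv_weaken[OF ac] hderiv_insert_hyp]
          hderiv_boxdot_mp[OF hderiv_weaken[OF bc] hderiv_insert_hyp])
qed

lemma deriv_boxdot_imps_K:
  "deriv Ax (boxdot_imps (Imp (Box (Imp A B)) (Imp (Box A) (Box B))))"
proof (intro deriv_boxdot_imps_Imp[THEN iffD2] deriv_boxdot_imps_curry, simp, rule deriv_ImpI)
  let ?H = "{And (Box (boxdot (Imp (boxdot_imps A) (boxdot_imps B)))) (Box (boxdot_imps A))}"
  have "hderiv Ax ?H (Box (boxdot (Imp (boxdot_imps A) (boxdot_imps B))))"
    and "hderiv Ax ?H (Box (boxdot_imps A))"
    by (rule hderiv_AndD1[OF hderiv_insert_hyp], rule hderiv_AndD2[OF hderiv_insert_hyp])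
  then show "hderiv Ax ?H (Box (boxdot_imps B))"
    by (rule hderiv_Box_mp[OF hderiv_Box_mono[OF deriv_boxdot_elim]])
qed

lemma deriv_boxdot_imps_of_LC:
  assumes Loeb: "\<And>A. deriv Ax (Imp (Box (Imp (Box A) A)) (Box A))"
  shows "LC A \<Longrightarrow> deriv Ax (boxdot_imps A)"
  unfolding LC_def
proof (induction rule: deriv.induct)
  case (ax_extra A)
  then consider (Loeb_axiom) C where "A = Imp (Box (Imp (Box C) C)) (Box C)"
    | (completeness) B where "A = Imp B (Box B)"
    unfolding lob_ax_def by blast
  then show ?case
  proof cases
    case Loeb_axiom
    then show ?thesis by (simp only: deriv_boxdot_imps_Loeb[OF Loeb])
  next
    case completeness
    then show ?thesis by (simp add: deriv_boxdotI deriv_boxdot_imps_Box)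
  qed
next
  case (ax_k A B)
  show ?case
    by (intro deriv_boxdot_imps_Imp[THEN iffD2] deriv_boxdot_imps_curry) (simp add: ax_and1)
next
  case (ax_s A B C)
  show ?case by (rule deriv_boxdot_imps_S)
next
  case (ax_and1 A B)
  show ?case by (simp add: deriv_boxdotI deriv.ax_and1)
next
  case (ax_and2 A B)
  show ?case by (simp add: deriv_boxdotI deriv.ax_and2)
next
  case (ax_andI A B)
  show ?case
    by (intro deriv_boxdot_imps_Imp[THEN iffD2] deriv_boxdot_imps_curry) (simp add: deriv_imp_refl)
next
  case (ax_or1 A B)
  show ?case by (simp add: deriv_boxdotI deriv.ax_or1)
next
  case (ax_or2 B A)
  show ?case by (simp add: deriv_boxdotI deriv.ax_or2)
next
  case (ax_orE A C B)
  show ?case by (rule deriv_boxdot_imps_OrE)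
next
  case (ax_bot A)
  show ?case by (simp add: deriv_boxdotI deriv.ax_bot)
next
  case (ax_K A B)
  show ?case by (rule deriv_boxdot_imps_K)
next
  case (ax_4 A)
  show ?case by (simp add: deriv_boxdotI deriv.ax_4)
next
  case (mp A B)
  then show ?case by (meson deriv_boxdot_imps_Imp deriv.mp)
next
  case (nec A)
  then show ?case by (simp add: deriv.nec)
qed

lemma tnnil_boxdot_imps_adequate:
  assumes Leivant: "\<And>A. deriv Ax (Imp (Box A) (Box (leiv A)))"
  shows "tnnil E \<Longrightarrow> boxdot_imps_adequate Ax E"
  by (induction rule: tnnil.induct)
    (simp_all add: boxdot_imps_adequate_atomic boxdot_imps_adequate_And boxdot_imps_adequate_Or
      boxdot_imps_adequate_Box Leivant boxdot_imps_adequate_Imp deriv_boxdot_imps_Box)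

end

theorem theorem4p23:
  assumes "tnnil A" and "LC A"
  shows "LLe_plus A"
proof -
  let ?Ax = "lob_ax \<union> {Imp (Box B) (Box (leiv B)) | B. True} \<union> {Imp p (Box p) | p. atomic p}"
  have atomic_Box: "\<And>p. atomic p \<Longrightarrow> deriv ?Ax (Imp p (Box p))"
    and Loeb: "\<And>B. deriv ?Ax (Imp (Box (Imp (Box B) B)) (Box B))"
    and Leivant: "\<And>B. deriv ?Ax (Imp (Box B) (Box (leiv B)))"
    unfolding lob_ax_def by (blast intro: ax_extra)+
  have "deriv ?Ax (boxdot_imps A)"
    by (rule deriv_boxdot_imps_of_LC[OF atomic_Box Loeb \<open>LC A\<close>])
  moreover have "deriv ?Ax (Imp (boxdot_imps A) A)"
    using tnnil_boxdot_imps_adequate[OF atomic_Box Leivant \<open>tnnil A\<close>]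
    by (simp add: boxdot_imps_adequate_def)
  ultimately show ?thesis
    unfolding LLe_plus_def by (rule deriv.mp[rotated])
qed

end
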